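(* The category $\mathcal O$ is a full subcategory of the category $\mathcal C^{hi}$; that is, every $\mathbf U(\infty)$-module in $\mathcal O$ lies in $\mathcal C^{hi}$.
   Context: $v$ indeterminate. $\mathbf U(\infty)$ is the $\mathbb Q(v)$-algebra with generators $E_i,F_i,K_i,K_i^{-1}$ ($i\in\mathbb Z$) and relations: $K_iK_j=K_jK_i$, $K_iK_i^{-1}=1$; $K_iE_j=v^{\delta_{i,j}-\delta_{i,j+1}}E_jK_i$; $K_iF_j=v^{\delta_{i,j+1}-\delta_{i,j}}F_jK_i$; $E_iE_j=E_jE_i$, $F_iF_j=F_jF_i$ if $|i-j|>1$; $E_iF_j-F_jE_i=\delta_{i,j}\frac{\widetilde K_i-\widetilde K_i^{-1}}{v-v^{-1}}$, $\widetilde K_i=K_iK_{i+1}^{-1}$; $E_i^2E_j-(v+v^{-1})E_iE_jE_i+E_jE_i^2=0$ and likewise for $F$ if $|i-j|=1$. $X(\infty)$ is the set of all integer sequences $\lambda=(\lambda_i)_{i\in\mathbb Z}$; $\alpha_i=\varepsilon_i-\varepsilon_{i+1}$ ($\varepsilon_i$ the unit sequence); $\mu\le_{wt}\lambda$ iff $\lambda-\mu$ is a finite $\mathbb N$-linear combination of the $\alpha_i$; $(-\infty,\lambda]=\{\mu:\mu\le_{wt}\lambda\}$. For a $\mathbf U(\infty)$-module $M$, $M_\lambda=\{x:K_ix=v^{\lambda_i}x\ \forall i\}$, $\mathrm{wt}(M)=\{\lambda:M_\lambda\ne0\}$; weight module: $M=\bigoplus_\lambda M_\lambda$. $\mathcal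 C^{hi}$: the full subcategory of weight modules $M$ such that for each $x\in M$ there is $n_0$ with $ux=0$ for every monomial $u$ in the $E_i$'s with at least $n_0$ factors. $\mathcal O$: the full subcategory of weight modules with finite-dimensional weight spaces for which there exist finitely many $\lambda^{(1)},\dots,\lambda^{(s)}\in X(\infty)$ with $\mathrm{wt}(M)\subseteq\bigcup_k(-\infty,\lambda^{(k)}]$. *)

theory Defs
  imports Main "HOL-Computational_Algebra.Polynomial" "HOL-Computational_Algebra.Fraction_Field"
begin

type_synonym qv = "rat poly fract"

definition vv :: qv where "vv = Fract [:0, 1:] 1"

definition Uinf_module ::
  "(qv \<Rightarrow> 'm::ab_group_add \<Rightarrow> 'm) \<Rightarrow> (int \<Rightarrow> 'm \<Rightarrow> 'm) \<Rightarrow> (int \<Rightarrow> 'm \<Rightarrow> 'm)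
    \<Rightarrow> (int \<Rightarrow> 'm \<Rightarrow> 'm) \<Rightarrow> (int \<Rightarrow> 'm \<Rightarrow> 'm) \<Rightarrow> bool" where
  "Uinf_module sm E F K Kinv \<longleftrightarrow>
     vector_space sm \<and>
     (\<forall>i. Vector_Spaces.linear sm sm (E i) \<and> Vector_Spaces.linear sm sm (F i) \<and>
          Vector_Spaces.linear sm sm (K i) \<and> Vector_Spaces.linear sm sm (Kinv i)) \<and>
     (\<forall>i j x. K i (K j x) = K j (K i x)) \<and>
     (\<forall>i x. K i (Kinv i x) = x) \<and>
     (\<forall>i j x. K i (E j x) =
        sm (vv powi ((if i = j then 1 else 0) - (if i = j + 1 then 1 else 0))) (E j (K i x))) \<and>
     (\<forall>i j x. K i (F j x) =
        sm (vv powi ((if i = j + 1 then 1 else 0) - (if i = j then 1 else 0))) (F j (K i x))) \<and>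
     (\<forall>i j x. \<bar>i - j\<bar> > 1 \<longrightarrow> E i (E j x) = E j (E i x) \<and> F i (F j x) = F j (F i x)) \<and>
     (\<forall>i j x. E i (F j x) - F j (E i x) =
        (if i = j then sm (inverse (vv - inverse vv))
                         (K i (Kinv (i + 1) x) - K (i + 1) (Kinv i x))
         else 0)) \<and>
     (\<forall>i j x. \<bar>i - j\<bar> = 1 \<longrightarrow>
        E i (E i (E j x)) - sm (vv + inverse vv) (E i (E j (E i x))) + E j (E i (E i x)) = 0 \<and>
        F i (F i (F j x)) - sm (vv + inverse vv) (F i (F j (F i x))) + F j (F i (F i x)) = 0)"

definition weight_space ::
  "(qv \<Rightarrow> 'm \<Rightarrow> 'm) \<Rightarrow> (int \<Rightarrow> 'm \<Rightarrow> 'm) \<Rightarrow> (int \<Rightarrow> int) \<Rightarrow> 'm set" where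
  "weight_space sm K lm = {x. \<forall>i. K i x = sm (vv powi lm i) x}"

definition weights ::
  "(qv \<Rightarrow> 'm::zero \<Rightarrow> 'm) \<Rightarrow> (int \<Rightarrow> 'm \<Rightarrow> 'm) \<Rightarrow> (int \<Rightarrow> int) set" where
  "weights sm K = {lm. \<exists>x \<in> weight_space sm K lm. x \<noteq> 0}"

text \<open>M is a weight module: M is the sum of its weight spaces (the sum is automatically direct).\<close>
definition weight_module ::
  "(qv \<Rightarrow> 'm::ab_group_add \<Rightarrow> 'm) \<Rightarrow> (int \<Rightarrow> 'm \<Rightarrow> 'm) \<Rightarrow> bool" where
  "weight_module sm K \<longleftrightarrow>
     (\<forall>x. \<exists>L f. finite L \<and> (\<forall>lm\<in>L. f lm \<in> weight_space sm K lm) \<and> x = (\<Sum>lm\<in>L. f lm))"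

text \<open>mu <=wt lambda iff lambda - mu = sum of c_i alpha_i, c finitely supported, c_i in N,
  alpha_i = eps_i - eps_(i+1); the j-th entry of that sum is c_j - c_(j-1).\<close>
definition wt_le :: "(int \<Rightarrow> int) \<Rightarrow> (int \<Rightarrow> int) \<Rightarrow> bool" where
  "wt_le mu lm \<longleftrightarrow>
     (\<exists>c :: int \<Rightarrow> nat. finite {i. c i \<noteq> 0} \<and> (\<forall>j. lm j - mu j = int (c j) - int (c (j - 1))))"

definition Emon :: "(int \<Rightarrow> 'm \<Rightarrow> 'm) \<Rightarrow> int list \<Rightarrow> 'm \<Rightarrow> 'm" where
  "Emon E is x = foldr E is x"

definition in_C_hi ::
  "(qv \<Rightarrow> 'm::ab_group_add \<Rightarrow> 'm) \<Rightarrow> (int \<Rightarrow> 'm \<Rightarrow> 'm) \<Rightarrow> (int \<Rightarrow> 'm \<Rightarrow> 'm) \<Rightarrow> bool" where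
  "in_C_hi sm E K \<longleftrightarrow> weight_module sm K \<and>
     (\<forall>x. \<exists>n0::nat. \<forall>is. length is \<ge> n0 \<longrightarrow> Emon E is x = 0)"

definition fin_dim_subspace :: "(qv \<Rightarrow> 'm::ab_group_add \<Rightarrow> 'm) \<Rightarrow> 'm set \<Rightarrow> bool" where
  "fin_dim_subspace sm S \<longleftrightarrow> (\<exists>B. finite B \<and> B \<subseteq> S \<and> S \<subseteq> module.span sm B)"

definition in_O ::
  "(qv \<Rightarrow> 'm::ab_group_add \<Rightarrow> 'm) \<Rightarrow> (int \<Rightarrow> 'm \<Rightarrow> 'm) \<Rightarrow> bool" where
  "in_O sm K \<longleftrightarrow> weight_module sm K \<and>
     (\<forall>lm. fin_dim_subspace sm (weight_space sm K lm)) \<and>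
     (\<exists>Lam. finite Lam \<and> weights sm K \<subseteq> (\<Union>lm\<in>Lam. {mu. wt_le mu lm}))"

end

theory Submission
  imports Defs
begin

text \<open>Each \<open>E\<^sub>j\<close> raises weights by the simple root \<open>\<alpha>\<^sub>j\<close>, so a monomial
  \<open>E\<^sub>i\<^sub>1 \<cdots> E\<^sub>i\<^sub>k\<close> sends a vector of weight \<open>\<mu>\<close> to weight \<open>\<mu> + \<alpha>\<^sub>i\<^sub>1 + \<dots> + \<alpha>\<^sub>i\<^sub>k\<close>.
  If the result is nonzero, this weight lies below one of the finitely many bounding weights
  \<open>\<lambda>\<close>; then \<open>\<lambda> - \<mu>\<close> is a sum of at least \<open>k\<close> simple roots. Since the coefficients of
  \<open>\<lambda> - \<mu>\<close> with respect to the simple roots are unique, \<open>k\<close> is bounded by the height of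
  \<open>\<lambda> - \<mu>\<close>, uniformly in the monomial. A general vector is a finite sum of weight vectors.\<close>

lemma vv_nonzero: "vv \<noteq> 0"
  unfolding vv_def by (simp add: Zero_fract_def eq_fract)

definition root_coeffs :: "(int \<Rightarrow> int) \<Rightarrow> (int \<Rightarrow> int) \<Rightarrow> (int \<Rightarrow> nat) \<Rightarrow> bool" where
  "root_coeffs lm mu d \<longleftrightarrow>
     finite {i. d i \<noteq> 0} \<and> (\<forall>j. lm j - mu j = int (d j) - int (d (j - 1)))"

definition wt_height :: "(int \<Rightarrow> int) \<Rightarrow> (int \<Rightarrow> int) \<Rightarrow> nat" where
  "wt_height lm mu = (let d = THE d. root_coeffs lm mu d in sum d {i. d i \<noteq> 0})"

text \<open>\<open>raise_wt is mu\<close> is \<open>\<mu> + \<Sum>\<^sub>k \<alpha>\<^sub>i\<^sub>k\<close> for \<open>is = [i\<^sub>1, \<dots>, i\<^sub>n]\<close>.\<close>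

definition raise_wt :: "int list \<Rightarrow> (int \<Rightarrow> int) \<Rightarrow> int \<Rightarrow> int" where
  "raise_wt is mu = (\<lambda>i. mu i + int (count_list is i) - int (count_list is (i - 1)))"

lemma shift_invariant_finite_support_eq_0:
  fixes e :: "int \<Rightarrow> 'a::zero"
  assumes fin: "finite {i. e i \<noteq> 0}" and shift: "\<And>j. e j = e (j - 1)"
  shows "e = (\<lambda>_. 0)"
proof -
  have shift_nat: "e (k + int n) = e k" for k n
  proof (induction n)
    case (Suc n)
    then show ?case using shift[of "k + int (Suc n)"] by simp
  qed simp
  have const: "e j = e 0" for j
    using shift_nat[of 0 "nat j"] shift_nat[of j "nat (- j)"] by (cases "j \<ge> 0") auto
  show ?thesis
  proof (rule ccontr)
    assume "e \<noteq> (\<lambda>_. 0)"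
    then obtain j where "e j \<noteq> 0" by auto
    then have "e i \<noteq> 0" for i using const by metis
    then have "{i. e i \<noteq> 0} = UNIV" by blast
    with fin show False using infinite_UNIV_int by simp
  qed
qed

lemma root_coeffs_unique:
  assumes "root_coeffs lm mu d" and "root_coeffs lm mu d'"
  shows "d = d'"
proof -
  define e where "e i = int (d i) - int (d' i)" for i
  have "{i. e i \<noteq> 0} \<subseteq> {i. d i \<noteq> 0} \<union> {i. d' i \<noteq> 0}" unfolding e_def by auto
  then have "finite {i. e i \<noteq> 0}"
    using assms unfolding root_coeffs_def by (meson finite_Un finite_subset)
  moreover have "e j = e (j - 1)" for j
  proof -
    have "lm j - mu j = int (d j) - int (d (j - 1))"
      and "lm j - mu j = int (d' j) - int (d' (j - 1))"
      using assms unfolding root_coeffs_def by blast+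
    then show ?thesis unfolding e_def by linarith
  qed
  ultimately have "e = (\<lambda>_. 0)" by (rule shift_invariant_finite_support_eq_0)
  then have "e i = 0" for i by simp
  then show "d = d'" unfolding e_def by auto
qed

lemma wt_height_eq:
  assumes "root_coeffs lm mu d"
  shows "wt_height lm mu = sum d {i. d i \<noteq> 0}"
proof -
  have "(THE d. root_coeffs lm mu d) = d"
    using assms root_coeffs_unique by blast
  then show ?thesis unfolding wt_height_def by simp
qed

text \<open>The coefficients of \<open>\<lambda> - \<mu>\<close> are those of \<open>\<lambda> - raise_wt is \<mu>\<close> plus the
  multiplicities of the indices in \<open>is\<close>.\<close>

lemma length_le_wt_height:
  assumes "wt_le (raise_wt is mu) lm"
  shows "length is \<le> wt_height lm mu"
proof -
  obtain c :: "int \<Rightarrow> nat" where c_fin: "finite {i. c i \<noteq> 0}"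
    and c_diff: "\<And>j. lm j - raise_wt is mu j = int (c j) - int (c (j - 1))"
    using assms unfolding wt_le_def by blast
  define d where "d i = c i + count_list is i" for i
  have supp: "{i. d i \<noteq> 0} = {i. c i \<noteq> 0} \<union> set is"
    unfolding d_def by (auto simp: count_list_0_iff)
  then have d_fin: "finite {i. d i \<noteq> 0}" using c_fin by simp
  have "root_coeffs lm mu d"
    using d_fin c_diff unfolding root_coeffs_def d_def raise_wt_def by (auto simp: algebra_simps)
  then have height: "wt_height lm mu = sum d {i. d i \<noteq> 0}" by (rule wt_height_eq)
  have "length is = sum (count_list is) (set is)"
    by (rule sum_count_set[symmetric]) auto
  also have "\<dots> \<le> sum d (set is)" by (rule sum_mono) (simp add: d_def)
  also have "\<dots> \<le> sum d {i. d i \<noteq> 0}" using supp by (intro sum_mono2[OF d_fin]) auto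
  finally show ?thesis unfolding height .
qed

context
  fixes sm :: "qv \<Rightarrow> 'm::ab_group_add \<Rightarrow> 'm"
    and E F K Kinv :: "int \<Rightarrow> 'm \<Rightarrow> 'm"
  assumes U: "Uinf_module sm E F K Kinv"
begin

lemma E_weight_space:
  assumes x: "x \<in> weight_space sm K mu"
  shows "E j x \<in> weight_space sm K (raise_wt [j] mu)"
proof -
  have vs: "vector_space sm" and E_lin: "module_hom sm sm (E j)"
    and KE: "\<And>i. K i (E j x) =
        sm (vv powi ((if i = j then 1 else 0) - (if i = j + 1 then 1 else 0))) (E j (K i x))"
    using U unfolding Uinf_module_def Vector_Spaces.linear_iff_module_hom by auto
  have "K i (E j x) = sm (vv powi raise_wt [j] mu i) (E j x)" for i
  proof -
    let ?a = "(if i = j then 1 else 0) - (if i = j + 1 then 1 else 0) :: int"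
    have "K i (E j x) = sm (vv powi ?a) (sm (vv powi mu i) (E j x))"
      using KE x module_hom.scale[OF E_lin] unfolding weight_space_def by simp
    also have "\<dots> = sm (vv powi (mu i + ?a)) (E j x)"
      using vs vv_nonzero
      by (simp add: vector_space_def module.scale_scale power_int_add mult.commute)
    finally show ?thesis by (simp add: raise_wt_def)
  qed
  then show ?thesis unfolding weight_space_def by simp
qed

lemma Emon_weight_space:
  assumes "x \<in> weight_space sm K mu"
  shows "Emon E is x \<in> weight_space sm K (raise_wt is mu)"
proof (induction "is")
  case Nil
  then show ?case using assms by (simp add: Emon_def raise_wt_def)
next
  case (Cons j "is")
  have "raise_wt [j] (raise_wt is mu) = raise_wt (j # is) mu"
    by (auto simp: raise_wt_def)
  then show ?case using E_weight_space[OF Cons.IH, of j] by (simp add: Emon_def)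
qed

lemma Emon_module_hom: "module_hom sm sm (Emon E is)"
proof (induction "is")
  case Nil
  have "vector_space sm" using U unfolding Uinf_module_def by simp
  then show ?case
    using vector_space.linear_ident unfolding Vector_Spaces.linear_iff_module_hom
    by (fastforce simp: Emon_def)
next
  case (Cons j "is")
  have "module_hom sm sm (E j)"
    using U unfolding Uinf_module_def Vector_Spaces.linear_iff_module_hom by simp
  then have "module_hom sm sm (E j \<circ> Emon E is)"
    using Cons.IH module_hom_compose by blast
  then show ?case by (simp add: Emon_def comp_def)
qed

lemma Emon_weight_vector_eq_0:
  assumes x: "x \<in> weight_space sm K mu"
    and bound: "weights sm K \<subseteq> (\<Union>lm\<in>Lam. {nu. wt_le nu lm})" and Lam_fin: "finite Lam"
    and long: "length is > (\<Sum>lm\<in>Lam. wt_height lm mu)"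
  shows "Emon E is x = 0"
proof (rule ccontr)
  assume "Emon E is x \<noteq> 0"
  then have "raise_wt is mu \<in> weights sm K"
    using Emon_weight_space[OF x] unfolding weights_def by blast
  then obtain lm where lm: "lm \<in> Lam" and le: "wt_le (raise_wt is mu) lm"
    using bound by blast
  from le have "length is \<le> wt_height lm mu" by (rule length_le_wt_height)
  also have "\<dots> \<le> (\<Sum>lm\<in>Lam. wt_height lm mu)"
    by (rule member_le_sum[OF lm _ Lam_fin]) simp
  finally show False using long by simp
qed

lemma Emon_long_eq_0:
  assumes wm: "weight_module sm K"
    and bound: "weights sm K \<subseteq> (\<Union>lm\<in>Lam. {nu. wt_le nu lm})" and Lam_fin: "finite Lam"
  shows "\<exists>n0. \<forall>is. length is \<ge> n0 \<longrightarrow> Emon E is x = 0"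
proof -
  obtain L f where L_fin: "finite L" and f: "\<forall>mu\<in>L. f mu \<in> weight_space sm K mu"
    and x: "x = (\<Sum>mu\<in>L. f mu)"
    using wm unfolding weight_module_def by blast
  let ?N = "\<Sum>mu\<in>L. \<Sum>lm\<in>Lam. wt_height lm mu"
  have "Emon E is x = 0" if long: "length is > ?N" for "is"
  proof -
    have "Emon E is (f mu) = 0" if mu: "mu \<in> L" for mu
    proof (rule Emon_weight_vector_eq_0[OF _ bound Lam_fin])
      show "f mu \<in> weight_space sm K mu" using f mu by blast
      have "(\<Sum>lm\<in>Lam. wt_height lm mu) \<le> ?N"
        by (rule member_le_sum[OF mu _ L_fin]) simp
      with long show "length is > (\<Sum>lm\<in>Lam. wt_height lm mu)" by simp
    qed
    then show ?thesis unfolding x module_hom.sum[OF Emon_module_hom] by simp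
  qed
  then have "\<forall>is. Suc ?N \<le> length is \<longrightarrow> Emon E is x = 0" by (simp add: Suc_le_eq)
  then show ?thesis by blast
qed

end

theorem proposition9p2:
  fixes sm :: "qv \<Rightarrow> 'm::ab_group_add \<Rightarrow> 'm"
    and E F K Kinv :: "int \<Rightarrow> 'm \<Rightarrow> 'm"
  assumes "Uinf_module sm E F K Kinv"
    and "in_O sm K"
  shows "in_C_hi sm E K"
proof -
  have wm: "weight_module sm K" using assms(2) unfolding in_O_def by simp
  obtain Lam where "finite Lam" and "weights sm K \<subseteq> (\<Union>lm\<in>Lam. {mu. wt_le mu lm})"
    using assms(2) unfolding in_O_def by blast
  then have "\<exists>n0. \<forall>is. length is \<ge> n0 \<longrightarrow> Emon E is x = 0" for x
    using Emon_long_eq_0[OF assms(1) wm] by blast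
  with wm show ?thesis unfolding in_C_hi_def by blast
qed

end
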